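(* Let $E$ be a nonempty directed graph with no source vertices, and $n$ a positive integer. Then $\mathcal S(E)$ is strongly $\mathbb Z/n\mathbb Z$-graded via $\phi:\mathcal S(E)\setminus\{0\}\to\mathbb Z/n\mathbb Z$, $\phi(xy^{-1})=(|x|-|y|)+n\mathbb Z$.
   Context: A directed graph $E=(E^0,E^1,\mathbf r,\mathbf s)$; a vertex $v$ is a source if $\mathbf r^{-1}(v)=\emptyset$; paths are finite sequences of edges $e_1\cdots e_n$ with $\mathbf r(e_i)=\mathbf s(e_{i+1})$ (vertices have length 0), $|x|$ is length. $\mathcal S(E)$ is the semigroup with zero generated by $E^0\cup E^1\cup\{e^{-1}:e\in E^1\}$ subject to $vw=\delta_{v,w}v$, $\mathbf s(e)e=e\mathbf r(e)=e$, $\mathbf r(e)e^{-1}=e^{-1}\mathbf s(e)=e^{-1}$, $e^{-1}f=\delta_{e,f}\mathbf r(e)$; nonzero elements are uniquely $xy^{-1}$ with paths $x,y$, $\mathbf r(x)=\mathbf r(y)$. A $\Gamma$-grading is a map $\phi:S\setminus\{0\}\to\Gamma$ with $\phi(st)=\phi(s)\phi(t)$ when $st\neq0$, $S_\alpha=\phi^{-1}(\alpha)\cup\{0\}$; it is strong if $S_\alpha S_\beta=S_{\alpha\beta}$ for all $\alpha,\beta$. *)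

theory Defs
  imports Main
begin

text \<open>A directed graph E is given by a vertex set V, an edge set Ed, and source/range
maps s, r (only their values on Ed matter).  A path is represented as a pair (v, es):
v is its source vertex and es its list of edges (es = [] gives the vertex v itself, of length 0).\<close>

type_synonym ('v,'e) gpath = "'v \<times> 'e list"

definition is_path :: "'v set \<Rightarrow> 'e set \<Rightarrow> ('e \<Rightarrow> 'v) \<Rightarrow> ('e \<Rightarrow> 'v) \<Rightarrow> ('v,'e) gpath \<Rightarrow> bool" where
  "is_path V Ed s r p \<longleftrightarrow> fst p \<in> V \<and> set (snd p) \<subseteq> Ed
     \<and> (snd p \<noteq> [] \<longrightarrow> s (hd (snd p)) = fst p)
     \<and> (\<forall>i. Suc i < length (snd p) \<longrightarrow> r (snd p ! i) = s (snd p ! Suc i))"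

definition path_range :: "('e \<Rightarrow> 'v) \<Rightarrow> ('v,'e) gpath \<Rightarrow> 'v" where
  "path_range r p = (if snd p = [] then fst p else r (last (snd p)))"

definition path_len :: "('v,'e) gpath \<Rightarrow> nat" where
  "path_len p = length (snd p)"

text \<open>Elements of the graph inverse semigroup S(E): None is the zero, Some (x, y) is x y^{-1}
(normal form, with r(x) = r(y)).\<close>

type_synonym ('v,'e) gis_elt = "(('v,'e) gpath \<times> ('v,'e) gpath) option"

definition gis_carrier :: "'v set \<Rightarrow> 'e set \<Rightarrow> ('e \<Rightarrow> 'v) \<Rightarrow> ('e \<Rightarrow> 'v) \<Rightarrow> ('v,'e) gis_elt set" where
  "gis_carrier V Ed s r = insert None
     {Some (x, y) | x y. is_path V Ed s r x \<and> is_path V Ed s r y \<and> path_range r x = path_range r y}"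

text \<open>Multiplication on normal forms: (x y^{-1})(z w^{-1}) = x p w^{-1} if z = y p,
 = x (w q)^{-1} if y = z q, and 0 otherwise.\<close>

fun gis_mult :: "('v,'e) gis_elt \<Rightarrow> ('v,'e) gis_elt \<Rightarrow> ('v,'e) gis_elt" where
  "gis_mult None _ = None"
| "gis_mult _ None = None"
| "gis_mult (Some (x, y)) (Some (z, w)) =
     (if fst y = fst z \<and> take (length (snd y)) (snd z) = snd y
      then Some ((fst x, snd x @ drop (length (snd y)) (snd z)), w)
      else if fst y = fst z \<and> take (length (snd z)) (snd y) = snd z
      then Some (x, (fst w, snd w @ drop (length (snd z)) (snd y)))
      else None)"

text \<open>The degree map phi(x y^{-1}) = (|x| - |y|) mod n, with Z/nZ represented by {0..<n}
and addition modulo n.\<close>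

definition gis_deg :: "nat \<Rightarrow> ('v,'e) gis_elt \<Rightarrow> int" where
  "gis_deg n a = (case a of None \<Rightarrow> 0
      | Some (x, y) \<Rightarrow> (int (path_len x) - int (path_len y)) mod int n)"

definition gis_comp :: "'v set \<Rightarrow> 'e set \<Rightarrow> ('e \<Rightarrow> 'v) \<Rightarrow> ('e \<Rightarrow> 'v) \<Rightarrow> nat \<Rightarrow> int \<Rightarrow> ('v,'e) gis_elt set" where
  "gis_comp V Ed s r n \<alpha> = {a \<in> gis_carrier V Ed s r. a = None \<or> gis_deg n a = \<alpha>}"

definition Zn_grading :: "'v set \<Rightarrow> 'e set \<Rightarrow> ('e \<Rightarrow> 'v) \<Rightarrow> ('e \<Rightarrow> 'v) \<Rightarrow> nat \<Rightarrow> bool" where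
  "Zn_grading V Ed s r n \<longleftrightarrow>
     (\<forall>a\<in>gis_carrier V Ed s r. \<forall>b\<in>gis_carrier V Ed s r.
        a \<noteq> None \<longrightarrow> b \<noteq> None \<longrightarrow> gis_mult a b \<noteq> None \<longrightarrow>
        gis_deg n (gis_mult a b) = (gis_deg n a + gis_deg n b) mod int n)"

definition Zn_strongly_graded :: "'v set \<Rightarrow> 'e set \<Rightarrow> ('e \<Rightarrow> 'v) \<Rightarrow> ('e \<Rightarrow> 'v) \<Rightarrow> nat \<Rightarrow> bool" where
  "Zn_strongly_graded V Ed s r n \<longleftrightarrow> Zn_grading V Ed s r n \<and>
     (\<forall>\<alpha>\<in>{0..<int n}. \<forall>\<beta>\<in>{0..<int n}.
        {gis_mult a b | a b. a \<in> gis_comp V Ed s r n \<alpha> \<and> b \<in> gis_comp V Ed s r n \<beta>}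
          = gis_comp V Ed s r n ((\<alpha> + \<beta>) mod int n))"

end

theory Submission
  imports Defs
begin

text \<open>The degree is additive because multiplication of normal forms only concatenates, or
cancels a prefix that occurs on both sides of the product.  Strongness comes from the absence
of sources: every vertex v is the range of paths p of every length k, and then
x y^-1 = (v p^-1)(p x y^-1), where the first factor has degree -k and the second degree
k + |x| - |y|.  Choosing k \<equiv> -\<alpha> (mod n) splits any element of S_(\<alpha>+\<beta>) as a product of
elements of S_\<alpha> and S_\<beta>.\<close>

fun walk :: "'e set \<Rightarrow> ('e \<Rightarrow> 'v) \<Rightarrow> ('e \<Rightarrow> 'v) \<Rightarrow> 'v \<Rightarrow> 'e list \<Rightarrow> bool" where
  "walk Ed s r v [] = True"
| "walk Ed s r v (e # es) \<longleftrightarrow> e \<in> Ed \<and> s e = v \<and> walk Ed s r (r e) es"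

fun walk_end :: "('e \<Rightarrow> 'v) \<Rightarrow> 'v \<Rightarrow> 'e list \<Rightarrow> 'v" where
  "walk_end r v [] = v"
| "walk_end r v (e # es) = walk_end r (r e) es"

lemma walk_append:
  "walk Ed s r v (xs @ ys) \<longleftrightarrow> walk Ed s r v xs \<and> walk Ed s r (walk_end r v xs) ys"
  by (induction xs arbitrary: v) auto

lemma walk_end_append: "walk_end r v (xs @ ys) = walk_end r (walk_end r v xs) ys"
  by (induction xs arbitrary: v) auto

lemma walk_iff:
  "walk Ed s r v es \<longleftrightarrow> set es \<subseteq> Ed \<and> (es \<noteq> [] \<longrightarrow> s (hd es) = v)
     \<and> (\<forall>i. Suc i < length es \<longrightarrow> r (es ! i) = s (es ! Suc i))"
proof (induction es arbitrary: v)
  case Nil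
  then show ?case by simp
next
  case (Cons e es)
  have "(\<forall>i. Suc i < length (e # es) \<longrightarrow> r ((e # es) ! i) = s ((e # es) ! Suc i))
     \<longleftrightarrow> (es \<noteq> [] \<longrightarrow> s (hd es) = r e) \<and> (\<forall>i. Suc i < length es \<longrightarrow> r (es ! i) = s (es ! Suc i))"
    by (cases es) (auto simp: All_less_Suc2)
  then show ?case using Cons.IH[of "r e"] by auto
qed

lemma is_path_iff_walk: "is_path V Ed s r (v, es) \<longleftrightarrow> v \<in> V \<and> walk Ed s r v es"
  by (simp add: is_path_def walk_iff)

lemma path_range_eq_walk_end: "path_range r (v, es) = walk_end r v es"
proof -
  have "walk_end r u es = r (last es)" if "es \<noteq> []" for u
    using that by (induction es arbitrary: u) (auto simp: neq_Nil_conv)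
  then show ?thesis by (simp add: path_range_def)
qed

lemma Some_in_gis_carrier_iff:
  "Some ((v, xs), (w, ys)) \<in> gis_carrier V Ed s r \<longleftrightarrow>
     v \<in> V \<and> walk Ed s r v xs \<and> w \<in> V \<and> walk Ed s r w ys \<and> walk_end r v xs = walk_end r w ys"
  by (auto simp: gis_carrier_def is_path_iff_walk path_range_eq_walk_end)

lemma None_in_gis_carrier: "None \<in> gis_carrier V Ed s r"
  by (simp add: gis_carrier_def)

lemma None_in_gis_comp: "None \<in> gis_comp V Ed s r n \<alpha>"
  by (simp add: gis_comp_def None_in_gis_carrier)

lemma gis_mult_cases:
  obtains (zero) "gis_mult a b = None"
  | (extend) v xs w ys p u zs where "a = Some ((v, xs), (w, ys))" "b = Some ((w, ys @ p), (u, zs))"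
      "gis_mult a b = Some ((v, xs @ p), (u, zs))"
  | (cancel) v xs w zs q u ys where "a = Some ((v, xs), (w, zs @ q))" "b = Some ((w, zs), (u, ys))"
      "gis_mult a b = Some ((v, xs), (u, ys @ q))"
proof (cases "gis_mult a b = None")
  case nonzero: False
  then obtain v xs w ys w' zs u ts
    where ab: "a = Some ((v, xs), (w, ys))" "b = Some ((w', zs), (u, ts))"
    by (cases a; cases b) auto
  show thesis
  proof (cases "w = w' \<and> take (length ys) zs = ys")
    case True
    then have "zs = ys @ drop (length ys) zs" by (metis append_take_drop_id)
    then show thesis using extend True ab by (metis gis_mult.simps(3) fst_conv snd_conv)
  next
    case False
    with nonzero ab have prefix: "w = w' \<and> take (length zs) ys = zs" by (auto split: if_splits)
    then have "ys = zs @ drop (length zs) ys" by (metis append_take_drop_id)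
    then show thesis using cancel False prefix ab by (metis gis_mult.simps(3) fst_conv snd_conv)
  qed
qed

lemma gis_mult_closed:
  assumes "a \<in> gis_carrier V Ed s r" and "b \<in> gis_carrier V Ed s r"
  shows "gis_mult a b \<in> gis_carrier V Ed s r"
  using assms
  by (cases a b rule: gis_mult_cases)
    (auto simp: None_in_gis_carrier Some_in_gis_carrier_iff walk_append walk_end_append)

lemma gis_deg_mult:
  assumes "gis_mult a b \<noteq> None"
  shows "gis_deg n (gis_mult a b) = (gis_deg n a + gis_deg n b) mod int n"
  using assms
  by (cases a b rule: gis_mult_cases) (auto simp: gis_deg_def path_len_def mod_add_eq algebra_simps)

lemma gis_Zn_grading: "Zn_grading V Ed s r n"
  by (simp add: Zn_grading_def gis_deg_mult)

lemma gis_mult_in_gis_comp: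
  assumes "a \<in> gis_comp V Ed s r n \<alpha>" and "b \<in> gis_comp V Ed s r n \<beta>"
  shows "gis_mult a b \<in> gis_comp V Ed s r n ((\<alpha> + \<beta>) mod int n)"
proof (cases "gis_mult a b = None")
  case False
  then have "a \<noteq> None" "b \<noteq> None" by (cases a b rule: gis_mult_cases; simp)+
  with assms show ?thesis
    using False by (auto simp: gis_comp_def gis_mult_closed gis_deg_mult)
qed (simp add: None_in_gis_comp)

lemma walk_of_length_ending_at:
  assumes graph: "\<forall>e\<in>Ed. s e \<in> V \<and> r e \<in> V"
    and no_sources: "\<forall>v\<in>V. \<exists>e\<in>Ed. r e = v"
    and "v \<in> V"
  shows "\<exists>u es. u \<in> V \<and> walk Ed s r u es \<and> walk_end r u es = v \<and> length es = k"
proof (induction k)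
  case 0
  then show ?case using \<open>v \<in> V\<close> by auto
next
  case (Suc k)
  then obtain u es where "u \<in> V" "walk Ed s r u es" "walk_end r u es = v" "length es = k"
    by blast
  moreover obtain e where "e \<in> Ed" "r e = u" using no_sources \<open>u \<in> V\<close> by blast
  ultimately have "s e \<in> V \<and> walk Ed s r (s e) (e # es) \<and> walk_end r (s e) (e # es) = v
      \<and> length (e # es) = Suc k"
    using graph by auto
  then show ?case by blast
qed

lemma gis_factor_shifting_degree:
  fixes c :: "('v, 'e) gis_elt"
  assumes graph: "\<forall>e\<in>Ed. s e \<in> V \<and> r e \<in> V"
    and no_sources: "\<forall>v\<in>V. \<exists>e\<in>Ed. r e = v"
    and c: "c \<in> gis_carrier V Ed s r" "c \<noteq> None"
  obtains a b where "a \<in> gis_carrier V Ed s r" "b \<in> gis_carrier V Ed s r" "c = gis_mult a b"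
    "gis_deg n a = (- int k) mod int n" "gis_deg n b = (int k + gis_deg n c) mod int n"
proof -
  obtain v xs w ys where c_eq: "c = Some ((v, xs), (w, ys))"
    using c(2) by (metis option.exhaust prod.exhaust)
  have c_carrier: "v \<in> V" "walk Ed s r v xs" "w \<in> V" "walk Ed s r w ys"
      "walk_end r v xs = walk_end r w ys"
    using c(1) by (simp_all add: c_eq Some_in_gis_carrier_iff)
  obtain u p where p: "u \<in> V" "walk Ed s r u p" "walk_end r u p = v" "length p = k"
    using walk_of_length_ending_at[OF graph no_sources \<open>v \<in> V\<close>] by blast
  show thesis
  proof
    show "Some ((v, []), (u, p)) \<in> gis_carrier V Ed s r"
      using p c_carrier by (simp add: Some_in_gis_carrier_iff)
    show "Some ((u, p @ xs), (w, ys)) \<in> gis_carrier V Ed s r"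
      using p c_carrier by (simp add: Some_in_gis_carrier_iff walk_append walk_end_append)
    show "c = gis_mult (Some ((v, []), (u, p))) (Some ((u, p @ xs), (w, ys)))"
      by (simp add: c_eq)
    show "gis_deg n (Some ((v, [] :: 'e list), (u, p))) = (- int k) mod int n"
      using p(4) by (simp add: gis_deg_def path_len_def)
    show "gis_deg n (Some ((u, p @ xs), (w, ys))) = (int k + gis_deg n c) mod int n"
      using p(4) by (simp add: c_eq gis_deg_def path_len_def mod_add_right_eq algebra_simps)
  qed
qed

lemma gis_comp_factor:
  assumes graph: "\<forall>e\<in>Ed. s e \<in> V \<and> r e \<in> V"
    and no_sources: "\<forall>v\<in>V. \<exists>e\<in>Ed. r e = v"
    and npos: "0 < n"
    and \<alpha>: "\<alpha> \<in> {0..<int n}" and \<beta>: "\<beta> \<in> {0..<int n}"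
    and c: "c \<in> gis_comp V Ed s r n ((\<alpha> + \<beta>) mod int n)"
  shows "\<exists>a b. a \<in> gis_comp V Ed s r n \<alpha> \<and> b \<in> gis_comp V Ed s r n \<beta> \<and> c = gis_mult a b"
proof (cases "c = None")
  case True
  then show ?thesis using None_in_gis_comp gis_mult.simps(1) by metis
next
  case False
  define k where "k = nat ((- \<alpha>) mod int n)"
  have k: "int k = (- \<alpha>) mod int n" using npos by (simp add: k_def)
  have c_deg: "gis_deg n c = (\<alpha> + \<beta>) mod int n" and c_carrier: "c \<in> gis_carrier V Ed s r"
    using c False by (auto simp: gis_comp_def)
  obtain a b where ab: "a \<in> gis_carrier V Ed s r" "b \<in> gis_carrier V Ed s r" "c = gis_mult a b"
    and a_deg: "gis_deg n a = (- int k) mod int n"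
    and b_deg: "gis_deg n b = (int k + gis_deg n c) mod int n"
    using gis_factor_shifting_degree[OF graph no_sources c_carrier False] by blast
  have "gis_deg n a = \<alpha>"
    using a_deg \<alpha> k by (simp add: mod_minus_eq)
  moreover have "gis_deg n b = \<beta>"
  proof -
    have "gis_deg n b = (- \<alpha> + (\<alpha> + \<beta>)) mod int n"
      unfolding b_deg c_deg k by (intro mod_add_cong) simp_all
    then show ?thesis using \<beta> by simp
  qed
  ultimately show ?thesis using ab by (auto simp: gis_comp_def)
qed

theorem lemma8p7:
  fixes V :: "'v set" and Ed :: "'e set" and s r :: "'e \<Rightarrow> 'v" and n :: nat
  assumes graph: "\<forall>e\<in>Ed. s e \<in> V \<and> r e \<in> V"
    and nonempty: "V \<noteq> {}"
    and no_sources: "\<forall>v\<in>V. \<exists>e\<in>Ed. r e = v"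
    and npos: "0 < n"
  shows "Zn_strongly_graded V Ed s r n"
  unfolding Zn_strongly_graded_def
proof (intro conjI ballI equalityI subsetI)
  show "Zn_grading V Ed s r n" by (rule gis_Zn_grading)
next
  fix \<alpha> \<beta> c
  assume "c \<in> {gis_mult a b | a b. a \<in> gis_comp V Ed s r n \<alpha> \<and> b \<in> gis_comp V Ed s r n \<beta>}"
  then show "c \<in> gis_comp V Ed s r n ((\<alpha> + \<beta>) mod int n)"
    using gis_mult_in_gis_comp by blast
next
  fix \<alpha> \<beta> c
  assume "\<alpha> \<in> {0..<int n}" "\<beta> \<in> {0..<int n}" "c \<in> gis_comp V Ed s r n ((\<alpha> + \<beta>) mod int n)"
  then show "c \<in> {gis_mult a b | a b. a \<in> gis_comp V Ed s r n \<alpha> \<and> b \<in> gis_comp V Ed s r n \<beta>}"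
    using gis_comp_factor[OF graph no_sources npos] by blast
qed

end
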